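(* Let $A,B$ be closed linear relations in $X^2$ such that $\{A,B\}$ is a dual pair with $(A^* )_s|_{D(B)}=B_s$ and $(B^* )_s|_{D(A)}=A_s$. Then $$D(A^* )=D(B)\oplus_A N(1+B^*A^* ),\qquad D(B^* )=D(A)\oplus_B N(1+A^*B^* ).$$ In particular, if $A^*=B$ (equivalently $A=B^*$), then $N(1+B^*A^* )=\{0\}$ (equivalently $N(1+A^*B^* )=\{0\}$).
   Context: $X$ is a complex Hilbert space; $X^2=X\times X$ with the product inner product. A linear relation is a linear subspace $T\subset X^2$; $D(T)$, $N(T)=\{x:(x,0)\in T\}$, $T(x)=\{y:(x,y)\in T\}$ as usual. Adjoint: $T^*=\{(f,g):\langle g,x\rangle=\langle f,y\rangle\ \forall (x,y)\in T\}$. For closed $T$: $T_\infty=\{(0,y)\in T\}$, $T_s=T\ominus T_\infty$ is an operator with $D(T_s)=D(T)$, $R(T_s)\subset T(0)^\perp$. A pair of closed relations $\{A,B\}$ is a dual pair if $A\subset B^*$ (equivalently $B\subset A^*$). Product of relations: $CT=\{(x,z):(x,y)\in T,(y,z)\in C\text{ for some }y\}$; $1+T=\{(x,x+y):(x,y)\in T\}$, so $N(1+B^*A^* )=\{g:(g,-g)\in B^*A^*\}$. $X_{+A}$ is $D(A^* )$ with inner product $\langle f,g\rangle_{+A}=\langle f,g\rangle+\langle (A^* )_s f,(A^* )_s g\rangle$ (a Hilbert space), and $\oplus_A$ denotes orthogonal sum in $X_{+A}$; similarly $X_{+B}$, $\oplus_B$ with $B$ in place of $A$. *)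

theory Defs
  imports "HOL-Analysis.Analysis"
begin

text \<open>The library has no complex inner product spaces; we introduce the standard axioms
  (inner product linear in the second, conjugate linear in the first argument; the norm,
  hence the metric and topology, are induced by the inner product).\<close>

class complex_inner = real_normed_vector +
  fixes scaleC :: "complex \<Rightarrow> 'a \<Rightarrow> 'a"
    and cinner :: "'a \<Rightarrow> 'a \<Rightarrow> complex"
  assumes scaleC_add_right: "scaleC a (x + y) = scaleC a x + scaleC a y"
    and scaleC_add_left: "scaleC (a + b) x = scaleC a x + scaleC b x"
    and scaleC_scaleC: "scaleC a (scaleC b x) = scaleC (a * b) x"
    and scaleC_one: "scaleC 1 x = x"
    and scaleR_scaleC: "scaleR r x = scaleC (complex_of_real r) x"
    and cinner_commute: "cinner x y = cnj (cinner y x)"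
    and cinner_add_left: "cinner (x + y) z = cinner x z + cinner y z"
    and cinner_scaleC_left: "cinner (scaleC a x) y = cnj a * cinner x y"
    and cinner_self_real: "Im (cinner x x) = 0"
    and cinner_self_nonneg: "0 \<le> Re (cinner x x)"
    and cinner_eq_zero_iff: "cinner x x = 0 \<longleftrightarrow> x = 0"
    and norm_eq_sqrt_cinner: "norm x = sqrt (Re (cinner x x))"

class chilbert_space = complex_inner + complete_space

definition lin_rel :: "('a::complex_inner \<times> 'a) set \<Rightarrow> bool" where
  "lin_rel T \<longleftrightarrow> (0, 0) \<in> T \<and>
     (\<forall>x y u v. (x, y) \<in> T \<longrightarrow> (u, v) \<in> T \<longrightarrow> (x + u, y + v) \<in> T) \<and>
     (\<forall>c x y. (x, y) \<in> T \<longrightarrow> (scaleC c x, scaleC c y) \<in> T)"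

text \<open>Closed linear relation: closed subspace of \<open>X\<^sup>2\<close> (product topology = topology of
  the product inner product).\<close>
definition closed_lin_rel :: "('a::complex_inner \<times> 'a) set \<Rightarrow> bool" where
  "closed_lin_rel T \<longleftrightarrow> lin_rel T \<and> closed T"

definition dom_rel :: "('a \<times> 'a) set \<Rightarrow> 'a set" where
  "dom_rel T = {x. \<exists>y. (x, y) \<in> T}"

definition ker_rel :: "('a::zero \<times> 'a) set \<Rightarrow> 'a set" where
  "ker_rel T = {x. (x, 0) \<in> T}"

definition mul_rel :: "('a::zero \<times> 'a) set \<Rightarrow> 'a set" where
  "mul_rel T = {y. (0, y) \<in> T}"

definition adj :: "('a::complex_inner \<times> 'a) set \<Rightarrow> ('a \<times> 'a) set" where
  "adj T = {(f, g). \<forall>x y. (x, y) \<in> T \<longrightarrow> cinner g x = cinner f y}"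

text \<open>\<open>T\<^sub>\<infinity> = {(0,y) \<in> T}\<close> and \<open>T\<^sub>s = T \<ominus> T\<^sub>\<infinity>\<close> (orthogonal complement of \<open>T\<^sub>\<infinity>\<close> in \<open>T\<close>
  w.r.t. the product inner product \<open>\<langle>(x,y),(u,v)\<rangle> = \<langle>x,u\<rangle> + \<langle>y,v\<rangle>\<close>).\<close>
definition infpart :: "('a::complex_inner \<times> 'a) set \<Rightarrow> ('a \<times> 'a) set" where
  "infpart T = {(x, y) \<in> T. x = 0}"

definition oppart :: "('a::complex_inner \<times> 'a) set \<Rightarrow> ('a \<times> 'a) set" where
  "oppart T = {(x, y) \<in> T. \<forall>u v. (u, v) \<in> infpart T \<longrightarrow> cinner x u + cinner y v = 0}"

definition restrict_rel :: "('a \<times> 'a) set \<Rightarrow> 'a set \<Rightarrow> ('a \<times> 'a) set" where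
  "restrict_rel T S = {(x, y) \<in> T. x \<in> S}"

text \<open>Product \<open>C T\<close> (first \<open>T\<close>, then \<open>C\<close>) and \<open>1 + T\<close>.\<close>
definition prod_rel :: "('a \<times> 'a) set \<Rightarrow> ('a \<times> 'a) set \<Rightarrow> ('a \<times> 'a) set" where
  "prod_rel C T = {(x, z). \<exists>y. (x, y) \<in> T \<and> (y, z) \<in> C}"

definition one_plus :: "('a::plus \<times> 'a) set \<Rightarrow> ('a \<times> 'a) set" where
  "one_plus T = {(x, x + y) | x y. (x, y) \<in> T}"

text \<open>Inner product of \<open>X\<^sub>+\<^sub>A\<close> on \<open>D(A\<^sup>*)\<close>:
  \<open>\<langle>f,g\<rangle>\<^sub>+\<^sub>A = \<langle>f,g\<rangle> + \<langle>(A\<^sup>*)\<^sub>s f, (A\<^sup>*)\<^sub>s g\<rangle>\<close>, where \<open>(A\<^sup>*)\<^sub>s f\<close> is the (unique) image of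
  \<open>f\<close> under the operator part \<open>(A\<^sup>*)\<^sub>s\<close>.\<close>
definition op_apply :: "('a \<times> 'a) set \<Rightarrow> 'a \<Rightarrow> 'a" where
  "op_apply T x = (THE y. (x, y) \<in> T)"

definition plus_inner :: "('a::complex_inner \<times> 'a) set \<Rightarrow> 'a \<Rightarrow> 'a \<Rightarrow> complex" where
  "plus_inner A f g = cinner f g + cinner (op_apply (oppart (adj A)) f) (op_apply (oppart (adj A)) g)"

definition is_orth_sum :: "('a::complex_inner \<times> 'a) set \<Rightarrow> 'a set \<Rightarrow> 'a set \<Rightarrow> 'a set \<Rightarrow> bool" where
  "is_orth_sum A S M N \<longleftrightarrow>
     S = {u + v | u v. u \<in> M \<and> v \<in> N} \<and> (\<forall>u\<in>M. \<forall>v\<in>N. plus_inner A u v = 0)"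

end

theory Submission
  imports Defs
begin

text \<open>Given \<open>f \<in> D(A\<^sup>*)\<close> with \<open>(f, F) \<in> (A\<^sup>*)\<^sub>s\<close>, project \<open>(f, F)\<close> orthogonally onto the closed
  subspace \<open>B\<close> of \<open>X\<^sup>2\<close>, getting \<open>(g, z)\<close>. This projection lies in \<open>B\<^sub>s\<close>, hence in \<open>(A\<^sup>*)\<^sub>s\<close>,
  and orthogonality of \<open>(f - g, F - z)\<close> to \<open>B\<close> says exactly \<open>(F - z, -(f - g)) \<in> B\<^sup>*\<close>; so
  \<open>f - g \<in> N(1 + B\<^sup>*A\<^sup>*)\<close>. If \<open>A\<^sup>* = B\<close>, \<open>(v, y) \<in> B\<close> and \<open>(y, -v) \<in> B\<^sup>*\<close>, then
  \<open>-\<parallel>v\<parallel>\<^sup>2 = \<parallel>y\<parallel>\<^sup>2\<close>, so the kernels are trivial.\<close>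

lemma cinner_add_right: "cinner x (y + z) = cinner x y + cinner (x::'a::complex_inner) z"
  by (metis cinner_commute cinner_add_left complex_cnj_add)

lemma cinner_scaleC_right: "cinner x (scaleC a y) = a * cinner (x::'a::complex_inner) y"
  by (metis cinner_commute cinner_scaleC_left complex_cnj_cnj complex_cnj_mult)

lemma cinner_zero_left [simp]: "cinner 0 (y::'a::complex_inner) = 0"
  by (metis add_0 add_cancel_right_right cinner_add_left)

lemma cinner_zero_right [simp]: "cinner x (0::'a::complex_inner) = 0"
  by (metis cinner_commute cinner_zero_left complex_cnj_zero)

lemma cinner_minus_left: "cinner (- x) y = - cinner (x::'a::complex_inner) y"
  by (metis add.right_inverse add_eq_0_iff cinner_add_left cinner_zero_left)

lemma cinner_minus_right: "cinner x (- y) = - cinner (x::'a::complex_inner) y"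
  by (metis cinner_commute cinner_minus_left complex_cnj_minus)

lemma cinner_diff_left: "cinner (x - y) z = cinner x z - cinner (y::'a::complex_inner) z"
  unfolding diff_conv_add_uminus by (simp only: cinner_add_left cinner_minus_left)

lemma cinner_diff_right: "cinner x (y - z) = cinner x y - cinner (x::'a::complex_inner) z"
  unfolding diff_conv_add_uminus by (simp only: cinner_add_right cinner_minus_right)

lemma scaleC_minus1_left: "scaleC (-1) (x::'a::complex_inner) = - x"
  by (metis of_real_1 of_real_minus scaleR_minus1_left scaleR_scaleC)

lemma power2_norm_eq_cinner: "(norm x)\<^sup>2 = Re (cinner x (x::'a::complex_inner))"
  by (simp add: norm_eq_sqrt_cinner cinner_self_nonneg)

lemma power2_norm_add:
  "(norm (u + v))\<^sup>2 = (norm u)\<^sup>2 + (norm v)\<^sup>2 + 2 * Re (cinner u (v::'a::complex_inner))"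
proof -
  have "Re (cinner v u) = Re (cinner u v)" using cinner_commute[of v u] by simp
  then show ?thesis by (simp add: power2_norm_eq_cinner cinner_add_left cinner_add_right)
qed

lemma power2_norm_diff:
  "(norm (u - v))\<^sup>2 = (norm u)\<^sup>2 + (norm v)\<^sup>2 - 2 * Re (cinner u (v::'a::complex_inner))"
  using power2_norm_add[of u "- v"] by (simp add: cinner_minus_right)

lemma parallelogram_law:
  "(norm (u + v))\<^sup>2 + (norm (u - v))\<^sup>2 = 2 * (norm u)\<^sup>2 + 2 * (norm (v::'a::complex_inner))\<^sup>2"
  by (simp add: power2_norm_add power2_norm_diff)

lemma cinner_polarization:
  fixes u v :: "'a::complex_inner"
  shows "cinner u v = complex_of_real (((norm (u + v))\<^sup>2 - (norm (u - v))\<^sup>2) / 4)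
    - \<i> * complex_of_real (((norm (u + scaleC \<i> v))\<^sup>2 - (norm (u - scaleC \<i> v))\<^sup>2) / 4)"
  by (simp add: complex_eq_iff power2_norm_add power2_norm_diff cinner_scaleC_right)

lemma continuous_on_cinner_left [continuous_intros]:
  assumes "continuous_on S f"
  shows "continuous_on S (\<lambda>z. cinner (f z) (x::'a::complex_inner))"
  unfolding cinner_polarization[of "f _" x] by (intro continuous_intros assms) auto

instantiation prod :: (complex_inner, complex_inner) complex_inner
begin

definition scaleC_prod_def: "scaleC c x = (scaleC c (fst x), scaleC c (snd x))"

definition cinner_prod_def: "cinner x y = cinner (fst x) (fst y) + cinner (snd x) (snd y)"

instance
proof
  fix a b :: complex and x y z :: "'a \<times> 'b" and r :: real
  show "scaleC a (x + y) = scaleC a x + scaleC a y"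
    by (simp add: scaleC_prod_def scaleC_add_right)
  show "scaleC (a + b) x = scaleC a x + scaleC b x"
    by (simp add: scaleC_prod_def scaleC_add_left)
  show "scaleC a (scaleC b x) = scaleC (a * b) x"
    by (simp add: scaleC_prod_def scaleC_scaleC)
  show "scaleC 1 x = x"
    by (simp add: scaleC_prod_def scaleC_one)
  show "scaleR r x = scaleC (complex_of_real r) x"
    by (simp add: scaleC_prod_def scaleR_prod_def scaleR_scaleC)
  show "cinner x y = cnj (cinner y x)"
    using cinner_commute[of "fst x" "fst y"] cinner_commute[of "snd x" "snd y"]
    by (simp add: cinner_prod_def)
  show "cinner (x + y) z = cinner x z + cinner y z"
    by (simp add: cinner_prod_def cinner_add_left)
  show "cinner (scaleC a x) y = cnj a * cinner x y"
    by (simp add: cinner_prod_def scaleC_prod_def cinner_scaleC_left algebra_simps)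
  show "Im (cinner x x) = 0"
    by (simp add: cinner_prod_def cinner_self_real)
  show "0 \<le> Re (cinner x x)"
    by (simp add: cinner_prod_def cinner_self_nonneg)
  show "norm x = sqrt (Re (cinner x x))"
    by (simp add: norm_prod_def cinner_prod_def power2_norm_eq_cinner)
  then show "cinner x x = 0 \<longleftrightarrow> x = 0"
    by (simp add: complex_eq_iff \<open>Im (cinner x x) = 0\<close>)
      (metis norm_eq_zero real_sqrt_eq_zero_cancel_iff)
qed

end

instance prod :: (chilbert_space, chilbert_space) chilbert_space ..

lemma cinner_Pair [simp]: "cinner (a, b) (c, d) = cinner a c + cinner b d"
  by (simp add: cinner_prod_def)

lemma scaleC_Pair [simp]: "scaleC c (a, b) = (scaleC c a, scaleC c b)"
  by (simp add: scaleC_prod_def)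

lemma scaleC_zero_right [simp]: "scaleC a (0::'a::complex_inner) = 0"
  by (metis add_cancel_right_right add_0 scaleC_add_right)

section \<open>Orthogonal projection onto a closed subspace\<close>

definition csubspace :: "'a::complex_inner set \<Rightarrow> bool" where
  "csubspace M \<longleftrightarrow> 0 \<in> M \<and> (\<forall>a\<in>M. \<forall>b\<in>M. a + b \<in> M) \<and> (\<forall>c. \<forall>a\<in>M. scaleC c a \<in> M)"

lemma csubspace_0: "csubspace M \<Longrightarrow> 0 \<in> M"
  by (simp add: csubspace_def)

lemma csubspace_add: "csubspace M \<Longrightarrow> a \<in> M \<Longrightarrow> b \<in> M \<Longrightarrow> a + b \<in> M"
  by (simp add: csubspace_def)

lemma csubspace_scaleC: "csubspace M \<Longrightarrow> a \<in> M \<Longrightarrow> scaleC c a \<in> M"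
  by (simp add: csubspace_def)

lemma csubspace_scaleR: "csubspace M \<Longrightarrow> a \<in> M \<Longrightarrow> scaleR r a \<in> M"
  by (metis csubspace_scaleC scaleR_scaleC)

lemma csubspace_diff: "csubspace M \<Longrightarrow> a \<in> M \<Longrightarrow> b \<in> M \<Longrightarrow> a - b \<in> M"
  by (metis csubspace_add csubspace_scaleC scaleC_minus1_left diff_conv_add_uminus)

lemma norm_diff_le_of_infimum:
  fixes x :: "'a::complex_inner"
  assumes M: "csubspace M" and d: "0 \<le> d" "\<And>m. m \<in> M \<Longrightarrow> d \<le> norm (x - m)"
    and ab: "a \<in> M" "b \<in> M"
  shows "(norm (a - b))\<^sup>2 \<le> 2 * (norm (x - a))\<^sup>2 + 2 * (norm (x - b))\<^sup>2 - 4 * d\<^sup>2"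
proof -
  \<comment> \<open>parallelogram law for \<open>x - a\<close>, \<open>x - b\<close>, bounding the middle term via the midpoint of \<open>a\<close>, \<open>b\<close>\<close>
  have "scaleR (1/2) (a + b) \<in> M" using M ab by (intro csubspace_scaleR csubspace_add)
  then have "2 * d \<le> 2 * norm (x - scaleR (1/2) (a + b))" using d(2) by simp
  also have "\<dots> = norm ((x - a) + (x - b))"
  proof -
    have "(x - a) + (x - b) = scaleR 2 (x - scaleR (1/2) (a + b))"
      by (simp add: algebra_simps scaleR_2)
    then show ?thesis by simp
  qed
  finally have "4 * d\<^sup>2 \<le> (norm ((x - a) + (x - b)))\<^sup>2"
    using d(1) power_mono[of "2 * d" _ 2] by (simp add: power_mult_distrib)
  moreover have "(x - a) - (x - b) = b - a" by simp
  ultimately show ?thesis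
    using parallelogram_law[of "x - a" "x - b"] by (simp add: norm_minus_commute)
qed

lemma minimizing_sequence_Cauchy:
  fixes x :: "'a::complex_inner"
  assumes M: "csubspace M" and d: "0 \<le> d" "\<And>m. m \<in> M \<Longrightarrow> d \<le> norm (x - m)"
    and s: "\<And>n. s n \<in> M" and lim: "(\<lambda>n. norm (x - s n)) \<longlonglongrightarrow> d"
  shows "Cauchy s"
proof (rule CauchyI)
  fix \<epsilon> :: real
  assume "0 < \<epsilon>"
  define f where "f n = 2 * (norm (x - s n))\<^sup>2 - 2 * d\<^sup>2" for n
  have "f \<longlonglongrightarrow> 2 * d\<^sup>2 - 2 * d\<^sup>2"
    unfolding f_def by (intro tendsto_intros lim)
  moreover have "2 * d\<^sup>2 - 2 * d\<^sup>2 < \<epsilon>\<^sup>2 / 2" using \<open>0 < \<epsilon>\<close> by simp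
  ultimately have "\<forall>\<^sub>F n in sequentially. f n < \<epsilon>\<^sup>2 / 2"
    by (rule order_tendstoD(2))
  then obtain N where N: "\<And>n. N \<le> n \<Longrightarrow> f n < \<epsilon>\<^sup>2 / 2"
    by (auto simp: eventually_sequentially)
  show "\<exists>N. \<forall>m\<ge>N. \<forall>n\<ge>N. norm (s m - s n) < \<epsilon>"
  proof (intro exI allI impI)
    fix m n
    assume "N \<le> m" "N \<le> n"
    then have "(norm (s m - s n))\<^sup>2 < \<epsilon>\<^sup>2"
      using norm_diff_le_of_infimum[OF M d s s, of m n] N[of m] N[of n] by (simp add: f_def)
    then show "norm (s m - s n) < \<epsilon>"
      using \<open>0 < \<epsilon>\<close> by (simp add: power_less_imp_less_base)
  qed
qed

lemma nearest_point_exists: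
  fixes x :: "'a::chilbert_space"
  assumes M: "csubspace M" "closed M"
  shows "\<exists>p\<in>M. \<forall>m\<in>M. norm (x - p) \<le> norm (x - m)"
proof -
  define d where "d = Inf ((\<lambda>m. norm (x - m)) ` M)"
  have ne: "(\<lambda>m. norm (x - m)) ` M \<noteq> {}" using csubspace_0[OF M(1)] by blast
  have d_le: "d \<le> norm (x - m)" if "m \<in> M" for m
    unfolding d_def using that by (intro cINF_lower bdd_belowI[of _ 0]) auto
  have d_nonneg: "0 \<le> d" unfolding d_def using ne by (auto intro: cInf_greatest)
  have "\<exists>m\<in>M. norm (x - m) < d + inverse (real (Suc n))" for n
    using cInf_lessD[OF ne, of "d + inverse (real (Suc n))"] unfolding d_def by auto
  then obtain s where s: "\<And>n. s n \<in> M"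
    and s_lt: "\<And>n. norm (x - s n) < d + inverse (real (Suc n))" by metis
  have lim: "(\<lambda>n. norm (x - s n)) \<longlonglongrightarrow> d"
  proof (rule tendsto_sandwich)
    show "\<forall>\<^sub>F n in sequentially. d \<le> norm (x - s n)" using d_le s by simp
    show "\<forall>\<^sub>F n in sequentially. norm (x - s n) \<le> d + inverse (real (Suc n))"
      by (intro always_eventually allI less_imp_le s_lt)
    show "(\<lambda>n. d + inverse (real (Suc n))) \<longlonglongrightarrow> d"
      using tendsto_add[OF tendsto_const LIMSEQ_inverse_real_of_nat, of d] by simp
  qed simp
  obtain p where p: "s \<longlonglongrightarrow> p"
    using minimizing_sequence_Cauchy[OF M(1) d_nonneg d_le s lim] Cauchy_convergent_iff
      convergent_def by blast
  have "p \<in> M" using closed_sequentially[OF M(2) s p] .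
  moreover have "(\<lambda>n. norm (x - s n)) \<longlonglongrightarrow> norm (x - p)" by (intro tendsto_intros p)
  then have "norm (x - p) = d" using lim LIMSEQ_unique by blast
  ultimately show ?thesis using d_le by auto
qed

lemma linear_le_quadratic_imp_zero:
  fixes a q :: real
  assumes "\<And>t. 2 * t * a \<le> t\<^sup>2 * q"
  shows "a = 0"
proof -
  define c where "c = \<bar>q\<bar> + 1"
  define t where "t = a / c"
  have c: "c > 0" "t * c = a" by (simp_all add: c_def t_def)
  have "c\<^sup>2 * (2 * t * a) \<le> c\<^sup>2 * (t\<^sup>2 * q)" by (simp add: assms mult_left_mono)
  then have "2 * (a * a) * c \<le> (a * a) * q"
    using c(2) by (simp add: power2_eq_square algebra_simps) (metis mult.assoc mult.commute)
  moreover have "(a * a) * q \<le> (a * a) * c" by (rule mult_left_mono) (auto simp: c_def)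
  ultimately have "(a * a) * c \<le> 0" by simp
  then show ?thesis using c(1) by (auto simp: mult_le_0_iff)
qed

lemma nearest_point_orthogonal:
  fixes x :: "'a::complex_inner"
  assumes M: "csubspace M" and p: "p \<in> M" and p_min: "\<And>m. m \<in> M \<Longrightarrow> norm (x - p) \<le> norm (x - m)"
    and m: "m \<in> M"
  shows "cinner (x - p) m = 0"
proof -
  have Re_zero: "Re (cinner (x - p) n) = 0" if n: "n \<in> M" for n
  proof (rule linear_le_quadratic_imp_zero)
    fix t :: real
    have "p + scaleR t n \<in> M" using M p n by (intro csubspace_add csubspace_scaleR)
    then have "(norm (x - p))\<^sup>2 \<le> (norm ((x - p) - scaleR t n))\<^sup>2"
      using p_min by (simp add: power_mono algebra_simps)
    also have "\<dots> = (norm (x - p))\<^sup>2 + t\<^sup>2 * (norm n)\<^sup>2 - 2 * t * Re (cinner (x - p) n)"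
    proof -
      have "Re (cinner (x - p) (scaleR t n)) = t * Re (cinner (x - p) n)"
        by (simp add: scaleR_scaleC cinner_scaleC_right)
      then show ?thesis by (simp add: power2_norm_diff power_mult_distrib)
    qed
    finally show "2 * t * Re (cinner (x - p) n) \<le> t\<^sup>2 * (norm n)\<^sup>2" by simp
  qed
  have "Re (cinner (x - p) (scaleC \<i> m)) = 0"
    using M m by (intro Re_zero csubspace_scaleC)
  then have "Im (cinner (x - p) m) = 0" by (simp add: cinner_scaleC_right)
  then show ?thesis using Re_zero[OF m] by (simp add: complex_eq_iff)
qed

lemma orthogonal_projection_exists:
  fixes x :: "'a::chilbert_space"
  assumes "csubspace M" "closed M"
  shows "\<exists>p\<in>M. \<forall>m\<in>M. cinner (x - p) m = 0"
  using nearest_point_exists[OF assms] nearest_point_orthogonal[OF assms(1)] by metis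

lemma lin_rel_iff_csubspace: "lin_rel T \<longleftrightarrow> csubspace (T :: ('a::complex_inner \<times> 'a) set)"
  unfolding lin_rel_def csubspace_def by (simp add: Ball_def split_paired_All zero_prod_def)

lemma zero_in_lin_rel: "lin_rel T \<Longrightarrow> (0, 0) \<in> T"
  by (simp add: lin_rel_def)

lemma mem_adj_iff: "(f, g) \<in> adj T \<longleftrightarrow> (\<forall>x y. (x, y) \<in> T \<longrightarrow> cinner g x = cinner f y)"
  by (simp add: adj_def)

lemma adj_swap: "A \<subseteq> adj B \<Longrightarrow> B \<subseteq> adj A"
  unfolding adj_def by (auto simp: subset_iff) (metis cinner_commute)

lemma csubspace_adj: "csubspace (adj T)"
  unfolding csubspace_def adj_def
  by (auto simp: cinner_add_left cinner_scaleC_left zero_prod_def scaleC_prod_def)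

lemma closed_adj: "closed (adj (T :: ('a::complex_inner \<times> 'a) set))"
proof -
  have "adj T = (\<Inter>q\<in>T. {p. cinner (snd p) (fst q) - cinner (fst p) (snd q) = 0})"
    unfolding adj_def by (auto; metis fst_conv snd_conv)
  moreover have "closed {p::'a \<times> 'a. cinner (snd p) (fst q) - cinner (fst p) (snd q) = 0}" for q
    by (intro closed_Collect_eq continuous_intros)
  ultimately show ?thesis by auto
qed

lemma csubspace_infpart: "csubspace T \<Longrightarrow> csubspace (infpart T)"
  unfolding csubspace_def infpart_def
  by (auto simp: Ball_def split_paired_All zero_prod_def; metis add_0 scaleC_zero_right)

lemma closed_infpart:
  assumes "closed (T :: ('a::complex_inner \<times> 'a) set)"
  shows "closed (infpart T)"
proof -
  have "infpart T = T \<inter> {p. fst p = 0}" unfolding infpart_def by auto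
  moreover have "closed {p::'a \<times> 'a. fst p = 0}" by (intro closed_Collect_eq continuous_intros)
  ultimately show ?thesis using assms by auto
qed

lemma oppart_subset: "oppart T \<subseteq> T"
  unfolding oppart_def by auto

lemma oppart_orthogonal_mul: "(x, y) \<in> oppart T \<Longrightarrow> (0, k) \<in> T \<Longrightarrow> cinner y k = 0"
  unfolding oppart_def infpart_def by auto

lemma csubspace_Int: "csubspace M \<Longrightarrow> csubspace N \<Longrightarrow> csubspace (M \<inter> N)"
  by (simp add: csubspace_def)

lemma csubspace_orthogonal_complement: "csubspace {x. \<forall>y\<in>S. cinner x y = 0}"
  by (simp add: csubspace_def cinner_add_left cinner_scaleC_left)

lemma oppart_eq_Int_orthogonal_complement:
  "oppart T = T \<inter> {p. \<forall>q\<in>infpart T. cinner p q = 0}"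
  unfolding oppart_def by (auto simp: cinner_prod_def)

lemma csubspace_oppart: "csubspace T \<Longrightarrow> csubspace (oppart T)"
  unfolding oppart_eq_Int_orthogonal_complement
  by (intro csubspace_Int csubspace_orthogonal_complement)

lemma oppart_single_valued:
  assumes T: "csubspace T" and "(x, y1) \<in> oppart T" "(x, y2) \<in> oppart T"
  shows "y1 = y2"
proof -
  have "(x, y1) - (x, y2) \<in> T" using assms oppart_subset by (intro csubspace_diff) auto
  then have "(0, y1 - y2) \<in> T" by simp
  then have "cinner y1 (y1 - y2) = 0" "cinner y2 (y1 - y2) = 0"
    using assms(2,3) by (auto intro: oppart_orthogonal_mul)
  then have "cinner (y1 - y2) (y1 - y2) = 0" by (simp add: cinner_diff_left)
  then show ?thesis by (simp add: cinner_eq_zero_iff)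
qed

lemma op_apply_oppart: "csubspace T \<Longrightarrow> (x, y) \<in> oppart T \<Longrightarrow> op_apply (oppart T) x = y"
  unfolding op_apply_def using oppart_single_valued by blast

text \<open>\<open>T = T\<^sub>s \<oplus> T\<^sub>\<infinity>\<close>: subtract from \<open>(x, y)\<close> its projection onto \<open>T\<^sub>\<infinity>\<close>.\<close>

lemma oppart_decomposition:
  fixes T :: "('a::chilbert_space \<times> 'a) set"
  assumes T: "csubspace T" "closed T" and xy: "(x, y) \<in> T"
  shows "\<exists>y'. (x, y') \<in> oppart T \<and> (0, y - y') \<in> T"
proof -
  obtain q where q: "q \<in> infpart T" and orth: "\<forall>m\<in>infpart T. cinner ((x, y) - q) m = 0"
    using orthogonal_projection_exists[OF csubspace_infpart[OF T(1)] closed_infpart[OF T(2)]]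
    by blast
  obtain w where qw: "q = (0, w)" and w: "(0, w) \<in> T" using q unfolding infpart_def by auto
  have "(x, y) - (0, w) \<in> T" using T(1) xy w by (intro csubspace_diff)
  with orth have "(x, y - w) \<in> oppart T" unfolding oppart_def qw by auto
  then show ?thesis using w by auto
qed

lemma op_apply_oppart_exists:
  fixes T :: "('a::chilbert_space \<times> 'a) set"
  assumes "csubspace T" "closed T" and "x \<in> dom_rel T"
  shows "(x, op_apply (oppart T) x) \<in> oppart T"
proof -
  obtain y where "(x, y) \<in> T" using assms(3) unfolding dom_rel_def by auto
  then obtain y' where "(x, y') \<in> oppart T" using oppart_decomposition[OF assms(1,2)] by blast
  then show ?thesis using op_apply_oppart[OF assms(1)] by simp
qed

lemma mem_ker_one_plus_iff: "x \<in> ker_rel (one_plus T) \<longleftrightarrow> (x, - x) \<in> (T :: ('a::ab_group_add \<times> 'a) set)"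
  unfolding ker_rel_def one_plus_def by (auto simp: add_eq_0_iff2) (metis minus_minus)

lemma mem_ker_one_plus_prod_iff:
  "x \<in> ker_rel (one_plus (prod_rel C T)) \<longleftrightarrow> (\<exists>y. (x, y) \<in> T \<and> (y, - x) \<in> (C :: ('a::ab_group_add \<times> 'a) set))"
  by (simp add: mem_ker_one_plus_iff prod_rel_def)

section \<open>The decomposition of \<open>D(A\<^sup>*)\<close>\<close>

lemma dom_adj_subset_sum:
  fixes A B :: "('a::chilbert_space \<times> 'a) set"
  assumes B: "closed_lin_rel B" and BA: "B \<subseteq> adj A" and opBA: "oppart B \<subseteq> oppart (adj A)"
    and f: "f \<in> dom_rel (adj A)"
  shows "\<exists>g h. f = g + h \<and> g \<in> dom_rel B \<and> h \<in> ker_rel (one_plus (prod_rel (adj B) (adj A)))"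
proof -
  have B_sub: "csubspace B" "closed B" using B by (auto simp: closed_lin_rel_def lin_rel_iff_csubspace)
  define F where "F = op_apply (oppart (adj A)) f"
  have fF: "(f, F) \<in> oppart (adj A)"
    unfolding F_def using op_apply_oppart_exists[OF csubspace_adj closed_adj f] .
  obtain g z where gz: "(g, z) \<in> B" and orth: "\<And>u w. (u, w) \<in> B \<Longrightarrow> cinner (f - g) u + cinner (F - z) w = 0"
    using orthogonal_projection_exists[OF B_sub, of "(f, F)"] by fastforce
  have "(g, z) \<in> oppart B"
  proof -
    have "cinner z w = 0" if "(0, w) \<in> B" for w
    proof -
      have "cinner F w = 0" using oppart_orthogonal_mul[OF fF] that BA by auto
      then show ?thesis using orth[OF that] by (simp add: cinner_diff_left)
    qed
    then show ?thesis using gz unfolding oppart_def infpart_def by auto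
  qed
  then have "(f - g, F - z) \<in> oppart (adj A)"
    using csubspace_diff[OF csubspace_oppart[OF csubspace_adj] fF] opBA by auto
  moreover have "(F - z, - (f - g)) \<in> adj B"
    unfolding mem_adj_iff cinner_minus_left using orth by (simp add: neg_eq_iff_add_eq_0)
  ultimately have "f - g \<in> ker_rel (one_plus (prod_rel (adj B) (adj A)))"
    using oppart_subset by (auto simp: mem_ker_one_plus_prod_iff)
  moreover have "g \<in> dom_rel B" using gz unfolding dom_rel_def by auto
  ultimately show ?thesis by force
qed

lemma plus_inner_dom_ker_eq_0:
  fixes A B :: "('a::chilbert_space \<times> 'a) set"
  assumes B: "closed_lin_rel B" and opBA: "oppart B \<subseteq> oppart (adj A)"
    and u: "u \<in> dom_rel B" and v: "v \<in> ker_rel (one_plus (prod_rel (adj B) (adj A)))"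
  shows "plus_inner A u v = 0"
proof -
  have B_sub: "csubspace B" "closed B" using B by (auto simp: closed_lin_rel_def lin_rel_iff_csubspace)
  define w where "w = op_apply (oppart B) u"
  have uw: "(u, w) \<in> oppart B" unfolding w_def by (rule op_apply_oppart_exists[OF B_sub u])
  then have uw_adj: "(u, w) \<in> oppart (adj A)" using opBA by auto
  obtain y where vy: "(v, y) \<in> adj A" and yv: "(y, - v) \<in> adj B"
    using v by (auto simp: mem_ker_one_plus_prod_iff)
  obtain y' where vy': "(v, y') \<in> oppart (adj A)" and "(0, y - y') \<in> adj A"
    using oppart_decomposition[OF csubspace_adj closed_adj vy] by blast
  then have "cinner w (y - y') = 0" using oppart_orthogonal_mul[OF uw_adj] by blast
  then have "cinner w y' = cinner w y" by (simp add: cinner_diff_right)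
  also have "cinner w y = - cinner u v"
  proof -
    have "cinner (- v) u = cinner y w" using yv uw oppart_subset by (auto simp: mem_adj_iff)
    then show ?thesis by (metis cinner_commute cinner_minus_left complex_cnj_minus)
  qed
  finally show ?thesis
    unfolding plus_inner_def
    using op_apply_oppart[OF csubspace_adj uw_adj] op_apply_oppart[OF csubspace_adj vy'] by simp
qed

lemma is_orth_sum_dom_adj:
  fixes A B :: "('a::chilbert_space \<times> 'a) set"
  assumes B: "closed_lin_rel B" and BA: "B \<subseteq> adj A" and opBA: "oppart B \<subseteq> oppart (adj A)"
  shows "is_orth_sum A (dom_rel (adj A)) (dom_rel B) (ker_rel (one_plus (prod_rel (adj B) (adj A))))"
proof -
  have "g + h \<in> dom_rel (adj A)"
    if g: "g \<in> dom_rel B" and h: "h \<in> ker_rel (one_plus (prod_rel (adj B) (adj A)))" for g h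
  proof -
    obtain z where "(g, z) \<in> adj A" using g BA unfolding dom_rel_def by auto
    moreover obtain y where "(h, y) \<in> adj A"
      using h by (auto simp: mem_ker_one_plus_prod_iff)
    ultimately have "(g, z) + (h, y) \<in> adj A" by (rule csubspace_add[OF csubspace_adj])
    then show ?thesis unfolding dom_rel_def by auto
  qed
  then show ?thesis
    unfolding is_orth_sum_def
    using dom_adj_subset_sum[OF B BA opBA] plus_inner_dom_ker_eq_0[OF B opBA] by blast
qed

lemma cinner_neg_self_eq_cinner_self_imp_zero:
  fixes v y :: "'a::complex_inner"
  assumes "cinner (- v) v = cinner y y"
  shows "v = 0"
proof -
  have "- (norm v)\<^sup>2 = (norm y)\<^sup>2"
    using arg_cong[OF assms, of Re] by (simp add: cinner_minus_left power2_norm_eq_cinner)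
  then have "(norm v)\<^sup>2 = 0" by (smt (verit) zero_le_power2)
  then show ?thesis by simp
qed

lemma ker_one_plus_adj_prod_eq_0:
  assumes "lin_rel T"
  shows "ker_rel (one_plus (prod_rel (adj T) T)) = {0}"
proof -
  have "v = 0" if "(v, y) \<in> T" "(y, - v) \<in> adj T" for v y
    using that by (intro cinner_neg_self_eq_cinner_self_imp_zero[of v y]) (auto simp: mem_adj_iff)
  moreover have "(0, 0) \<in> adj T" by (rule csubspace_0[OF csubspace_adj, unfolded zero_prod_def])
  ultimately show ?thesis
    using zero_in_lin_rel[OF assms] by (auto simp: mem_ker_one_plus_prod_iff)
qed

lemma ker_one_plus_prod_adj_eq_0:
  assumes "lin_rel T"
  shows "ker_rel (one_plus (prod_rel T (adj T))) = {0}"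
proof -
  have "v = 0" if "(v, y) \<in> adj T" "(y, - v) \<in> T" for v y
    using that
    by (intro cinner_neg_self_eq_cinner_self_imp_zero[of v y])
      (auto simp: mem_adj_iff cinner_minus_left cinner_minus_right)
  moreover have "(0, 0) \<in> adj T" by (rule csubspace_0[OF csubspace_adj, unfolded zero_prod_def])
  ultimately show ?thesis
    using zero_in_lin_rel[OF assms] by (auto simp: mem_ker_one_plus_prod_iff)
qed

theorem lemma2p2:
  fixes A B :: "('a::chilbert_space \<times> 'a) set"
  assumes "closed_lin_rel A" and "closed_lin_rel B"
    and "A \<subseteq> adj B"
    and "restrict_rel (oppart (adj A)) (dom_rel B) = oppart B"
    and "restrict_rel (oppart (adj B)) (dom_rel A) = oppart A"
  shows "is_orth_sum A (dom_rel (adj A)) (dom_rel B)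
           (ker_rel (one_plus (prod_rel (adj B) (adj A))))
       \<and> is_orth_sum B (dom_rel (adj B)) (dom_rel A)
           (ker_rel (one_plus (prod_rel (adj A) (adj B))))
       \<and> (adj A = B \<longrightarrow>
            ker_rel (one_plus (prod_rel (adj B) (adj A))) = {0}
          \<and> ker_rel (one_plus (prod_rel (adj A) (adj B))) = {0})"
proof (intro conjI impI)
  have "oppart B \<subseteq> oppart (adj A)" "oppart A \<subseteq> oppart (adj B)"
    using assms(4,5) unfolding restrict_rel_def by auto
  then show "is_orth_sum A (dom_rel (adj A)) (dom_rel B)
      (ker_rel (one_plus (prod_rel (adj B) (adj A))))"
    and "is_orth_sum B (dom_rel (adj B)) (dom_rel A)
      (ker_rel (one_plus (prod_rel (adj A) (adj B))))"
    using is_orth_sum_dom_adj[OF assms(2) adj_swap[OF assms(3)]]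
      is_orth_sum_dom_adj[OF assms(1) assms(3)] by simp_all
next
  assume "adj A = B"
  moreover have "lin_rel B" using assms(2) by (simp add: closed_lin_rel_def)
  ultimately show "ker_rel (one_plus (prod_rel (adj B) (adj A))) = {0}"
    and "ker_rel (one_plus (prod_rel (adj A) (adj B))) = {0}"
    using ker_one_plus_adj_prod_eq_0[of B] ker_one_plus_prod_adj_eq_0[of B] by simp_all
qed

end
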